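(* Let $V$ be an $m$-dimensional real vector space carrying two inner products $g$ and $g_E$, and let $\mathrm{II}$ be a symmetric bilinear form on $V$ which is positive semidefinite, with $g_E$-trace $\bar H=\mathrm{tr}_{g_E}\mathrm{II}>0$. Let $H>0$ satisfy $H^2 g(v,v)\ge\bar H^2 g_E(v,v)$ for all $v\in V$. Then for every $g$-orthonormal basis $\{\tau_i\}_{i=1}^m$ and every $g_E$-orthonormal basis $\{\bar\tau_i\}_{i=1}^m$ of $V$, $$H\;\ge\;\sum_{i=1}^m\mathrm{II}(\tau_i,\bar\tau_i).$$
   Context: In the paper this is applied at a point $p$ of $\partial M$ with $V=T_p\partial M$ identified with $T_{F(p)}\partial\bar M$ via the boundary diffeomorphism $F:\partial M\to\partial\bar M$ ($\bar M\subset\mathbb R^{n+2}$ convex), $g$ the induced Riemannian metric, $g_E$ the pulled-back Euclidean metric, $\mathrm{II}$ the pulled-back Euclidean second fundamental form of $\partial\bar M$, $\bar H$ its mean curvature and $H=H_{\partial M}$ the mean curvature of $\partial M$; the hypothesis is then the rescaled mean curvature comparison $H_{\partial M}^2g\ge \bar H^2 g_E$. *)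

theory Defs
  imports "HOL-Analysis.Analysis"
begin

definition is_inner_product :: "('a::real_vector \<Rightarrow> 'a \<Rightarrow> real) \<Rightarrow> bool" where
  "is_inner_product g \<longleftrightarrow> bilinear g \<and> (\<forall>u v. g u v = g v u) \<and> (\<forall>v. v \<noteq> 0 \<longrightarrow> g v v > 0)"

definition sym_bilinear_form :: "('a::real_vector \<Rightarrow> 'a \<Rightarrow> real) \<Rightarrow> bool" where
  "sym_bilinear_form B \<longleftrightarrow> bilinear B \<and> (\<forall>u v. B u v = B v u)"

definition orthonormal_basis ::
    "('a::euclidean_space \<Rightarrow> 'a \<Rightarrow> real) \<Rightarrow> (nat \<Rightarrow> 'a) \<Rightarrow> bool" where
  "orthonormal_basis g tau \<longleftrightarrow>
     (\<forall>i<DIM('a). \<forall>j<DIM('a). g (tau i) (tau j) = (if i = j then 1 else 0)) \<and>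
     span (tau ` {..<DIM('a)}) = UNIV"

text \<open>Trace of a bilinear form B with respect to an inner product g:
  the sum of B(e_i,e_i) over a g-orthonormal basis (independent of the choice).\<close>
definition trace_wrt ::
    "('a::euclidean_space \<Rightarrow> 'a \<Rightarrow> real) \<Rightarrow> ('a \<Rightarrow> 'a \<Rightarrow> real) \<Rightarrow> real" where
  "trace_wrt g B = (let e = (SOME e. orthonormal_basis g e) in (\<Sum>i<DIM('a). B (e i) (e i)))"

end

theory Submission
  imports Defs
begin

(* A positive semidefinite form is a finite sum of squares of linear forms (split off
   Q(-,w) Q(-,w) / Q(w,w) repeatedly), so it suffices to treat a single square f(-) f(-).
   Let w be the gE-representer of f and u = sum_i f(taubar_i) tau_i.  Then
   sum_i f(tau_i) f(taubar_i) = f(u) = gE(u,w), and Cauchy-Schwarz together with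
   gE <= (H/Hbar)^2 g bounds this by (H/Hbar) |u|_g |w|_gE = (H/Hbar) sum_i f(taubar_i)^2.
   Summing over the squares gives (H/Hbar) tr_gE II = H.  The same decomposition shows that
   the trace does not depend on the orthonormal basis: for a square it is gE(w,w). *)

lemma inner_product_sym_bilinear_form: "is_inner_product h \<Longrightarrow> sym_bilinear_form h"
  by (simp add: is_inner_product_def sym_bilinear_form_def)

lemma inner_product_self_nonneg: "is_inner_product h \<Longrightarrow> 0 \<le> h v v"
  unfolding is_inner_product_def by (cases "v = 0") (auto simp: bilinear_lzero less_imp_le)

lemma sym_bilinear_form_expand_diff:
  assumes "sym_bilinear_form Q"
  shows "Q (u - t *\<^sub>R w) (u - t *\<^sub>R w) = Q u u - 2 * t * Q u w + t\<^sup>2 * Q w w"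
  using assms
  by (simp add: sym_bilinear_form_def bilinear_lsub bilinear_rsub bilinear_lmul bilinear_rmul
      power2_eq_square algebra_simps)

lemma psd_form_Cauchy_Schwarz:
  assumes Q: "sym_bilinear_form Q" and psd: "\<And>v. 0 \<le> Q v v"
  shows "(Q u w)\<^sup>2 \<le> Q u u * Q w w"
proof -
  have quadratic: "0 \<le> Q u u - 2 * t * Q u w + t\<^sup>2 * Q w w" for t
    using psd[of "u - t *\<^sub>R w"] by (simp add: sym_bilinear_form_expand_diff[OF Q])
  show ?thesis
  proof (cases "Q w w = 0")
    case True
    have "Q u w = 0"
    proof (rule ccontr)
      assume "Q u w \<noteq> 0"
      then have "Q u u - 2 * ((Q u u + 1) / (2 * Q u w)) * Q u w = -1"
        by (simp add: field_simps)
      with quadratic[of "(Q u u + 1) / (2 * Q u w)"] True show False by simp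
    qed
    with True show ?thesis by simp
  next
    case False
    with psd[of w] have "0 < Q w w" by simp
    with quadratic[of "Q u w / Q w w"] show ?thesis
      by (simp add: power2_eq_square field_simps)
  qed
qed

lemma psd_form_self_pos_if_nonzero:
  assumes "sym_bilinear_form Q" "\<And>v. 0 \<le> Q v v" and "Q w v \<noteq> 0"
  shows "0 < Q w w"
proof -
  from \<open>Q w v \<noteq> 0\<close> have "0 < (Q w v)\<^sup>2" by simp
  also have "\<dots> \<le> Q w w * Q v v" by (rule psd_form_Cauchy_Schwarz[OF assms(1,2)])
  finally show ?thesis using assms(2)[of w] assms(2)[of v] by (auto simp: zero_less_mult_iff)
qed

definition rank_one_deflation :: "('a \<Rightarrow> 'a \<Rightarrow> real) \<Rightarrow> 'a \<Rightarrow> 'a \<Rightarrow> 'a \<Rightarrow> real" where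
  "rank_one_deflation Q w u v = Q u v - Q u w * Q v w / Q w w"

lemma sym_bilinear_form_rank_one_deflation:
  assumes "sym_bilinear_form Q"
  shows "sym_bilinear_form (rank_one_deflation Q w)"
proof -
  have bil: "bilinear Q" and sym: "\<And>u v. Q u v = Q v u"
    using assms by (auto simp: sym_bilinear_form_def)
  show ?thesis
    unfolding sym_bilinear_form_def bilinear_def rank_one_deflation_def
    by (auto intro!: linearI simp: bilinear_ladd[OF bil] bilinear_radd[OF bil]
        bilinear_lmul[OF bil] bilinear_rmul[OF bil] sym algebra_simps add_divide_distrib)
qed

lemma rank_one_deflation_nonneg:
  assumes "sym_bilinear_form Q" and "\<And>v. 0 \<le> Q v v" and "0 < Q w w"
  shows "0 \<le> rank_one_deflation Q w v v"
  using psd_form_Cauchy_Schwarz[OF assms(1,2), of v w] assms(3)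
  by (simp add: rank_one_deflation_def power2_eq_square divide_le_eq)

lemma rank_one_deflation_self:
  assumes "sym_bilinear_form Q" and "0 < Q w w"
  shows "rank_one_deflation Q w w v = 0"
  using assms by (simp add: rank_one_deflation_def sym_bilinear_form_def)

lemma bilinear_eq_0_on_spanning_set:
  fixes Q :: "'a::real_vector \<Rightarrow> 'a \<Rightarrow> real"
  assumes "bilinear Q" and "span B = UNIV" and "\<And>b v. b \<in> B \<Longrightarrow> Q b v = 0"
  shows "Q u v = 0"
proof -
  have "linear (\<lambda>x. Q x v)" using assms(1) by (simp add: bilinear_def)
  then show ?thesis using linear_eq_0_on_span[of "\<lambda>x. Q x v" B u] assms(2,3) by simp
qed

lemma psd_form_sum_of_squares:
  fixes Q :: "'a::real_vector \<Rightarrow> 'a \<Rightarrow> real" and B :: "'a set"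
  assumes "finite B" and "span B = UNIV"
    and "sym_bilinear_form Q" and "\<And>v. 0 \<le> Q v v"
  shows "\<exists>(n::nat) f. (\<forall>j<n. linear (f j)) \<and> (\<forall>u v. Q u v = (\<Sum>j<n. f j u * f j v))"
  using assms(3,4)
  \<comment> \<open>Induction on the number of vectors of B outside the radical of Q: deflating Q along
    such a vector w moves w into the radical and keeps the radical.\<close>
proof (induction "card {b \<in> B. \<exists>v. Q b v \<noteq> 0}" arbitrary: Q rule: less_induct)
  case less
  show ?case
  proof (cases "\<exists>b\<in>B. \<exists>v. Q b v \<noteq> 0")
    case False
    have "bilinear Q" using less.prems(1) by (simp add: sym_bilinear_form_def)
    then have "Q u v = 0" for u v
      using False bilinear_eq_0_on_spanning_set[OF _ assms(2)] by blast
    then show ?thesis by (intro exI[of _ 0]) simp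
  next
    case True
    then obtain w v0 where "w \<in> B" and "Q w v0 \<noteq> 0" by blast
    have pos: "0 < Q w w" by (rule psd_form_self_pos_if_nonzero[OF less.prems \<open>Q w v0 \<noteq> 0\<close>])
    let ?R = "rank_one_deflation Q w"
    have "?R w v = 0" for v by (rule rank_one_deflation_self[OF less.prems(1) pos])
    moreover have "?R b v = 0" if "\<forall>u. Q b u = 0" for b v
      using that by (simp add: rank_one_deflation_def)
    ultimately have "{b \<in> B. \<exists>v. ?R b v \<noteq> 0} \<subseteq> {b \<in> B. \<exists>v. Q b v \<noteq> 0} - {w}"
      by blast
    then have "{b \<in> B. \<exists>v. ?R b v \<noteq> 0} \<subset> {b \<in> B. \<exists>v. Q b v \<noteq> 0}"
      using \<open>w \<in> B\<close> \<open>Q w v0 \<noteq> 0\<close> by blast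
    then have "card {b \<in> B. \<exists>v. ?R b v \<noteq> 0} < card {b \<in> B. \<exists>v. Q b v \<noteq> 0}"
      using \<open>finite B\<close> by (intro psubset_card_mono) auto
    from less.hyps[OF this sym_bilinear_form_rank_one_deflation[OF less.prems(1)]
        rank_one_deflation_nonneg[OF less.prems pos]]
    obtain n :: nat and f
      where lin: "\<forall>j<n. linear (f j)" and sos: "\<forall>u v. ?R u v = (\<Sum>j<n. f j u * f j v)"
      by blast
    define f' where "f' = f(n := \<lambda>u. Q u w / sqrt (Q w w))"
    have "linear (\<lambda>u. Q u w / sqrt (Q w w))"
      using less.prems(1)
      by (auto intro!: linearI simp: sym_bilinear_form_def bilinear_ladd bilinear_lmul add_divide_distrib)
    then have "\<forall>j<Suc n. linear (f' j)"
      using lin by (simp add: f'_def less_Suc_eq)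
    moreover have "Q u v = (\<Sum>j<Suc n. f' j u * f' j v)" for u v
    proof -
      have "(\<Sum>j<n. f' j u * f' j v) = ?R u v"
        using sos by (simp add: f'_def)
      moreover have "f' n u * f' n v = Q u w * Q v w / Q w w"
        using pos by (simp add: f'_def)
      ultimately show ?thesis by (simp add: rank_one_deflation_def)
    qed
    ultimately show ?thesis by blast
  qed
qed

lemma sum_of_squares_form_sum:
  fixes f :: "nat \<Rightarrow> 'a \<Rightarrow> real" and I :: "'b set"
  assumes "\<forall>u v. Q u v = (\<Sum>j<n. f j u * f j v)"
  shows "(\<Sum>i\<in>I. Q (x i) (y i)) = (\<Sum>j<n. \<Sum>i\<in>I. f j (x i) * f j (y i))"
proof -
  have "(\<Sum>i\<in>I. Q (x i) (y i)) = (\<Sum>i\<in>I. \<Sum>j<n. f j (x i) * f j (y i))"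
    using assms by simp
  also have "\<dots> = (\<Sum>j<n. \<Sum>i\<in>I. f j (x i) * f j (y i))"
    by (rule sum.swap)
  finally show ?thesis .
qed

lemma orthonormal_basis_combination_inner:
  fixes h :: "'a::euclidean_space \<Rightarrow> 'a \<Rightarrow> real"
  assumes "bilinear h" and "orthonormal_basis h e" and "j < DIM('a)"
  shows "h (\<Sum>i<DIM('a). c i *\<^sub>R e i) (e j) = c j"
proof -
  have lin: "linear (\<lambda>x. h x (e j))" using assms(1) by (simp add: bilinear_def)
  have "h (\<Sum>i<DIM('a). c i *\<^sub>R e i) (e j) = (\<Sum>i<DIM('a). c i * h (e i) (e j))"
    by (simp add: linear_sum[OF lin] linear_scale[OF lin])
  also have "\<dots> = (\<Sum>i<DIM('a). if i = j then c j else 0)"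
    using assms(2,3) by (intro sum.cong) (auto simp: orthonormal_basis_def)
  finally show ?thesis using assms(3) by simp
qed

lemma orthonormal_basis_expansion:
  fixes h :: "'a::euclidean_space \<Rightarrow> 'a \<Rightarrow> real"
  assumes ip: "is_inner_product h" and onb: "orthonormal_basis h e"
  shows "v = (\<Sum>i<DIM('a). h v (e i) *\<^sub>R e i)"
proof -
  define d where "d = v - (\<Sum>i<DIM('a). h v (e i) *\<^sub>R e i)"
  have bil: "bilinear h" using ip by (simp add: is_inner_product_def)
  have "linear (h d)" using bil by (simp add: bilinear_def)
  moreover have "h d x = 0" if "x \<in> e ` {..<DIM('a)}" for x
    using that orthonormal_basis_combination_inner[OF bil onb]
    by (auto simp: d_def bilinear_lsub[OF bil])
  moreover have "d \<in> span (e ` {..<DIM('a)})" using onb by (simp add: orthonormal_basis_def)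
  ultimately have "h d d = 0" by (rule linear_eq_0_on_span)
  then have "d = 0" using ip by (auto simp: is_inner_product_def)
  then show ?thesis by (simp add: d_def)
qed

lemma orthonormal_basis_linear_expansion:
  fixes h :: "'a::euclidean_space \<Rightarrow> 'a \<Rightarrow> real"
  assumes "is_inner_product h" and "orthonormal_basis h e" and "linear f"
  shows "f v = (\<Sum>i<DIM('a). h v (e i) * f (e i))"
  by (subst orthonormal_basis_expansion[OF assms(1,2), of v])
    (simp add: linear_sum[OF assms(3)] linear_scale[OF assms(3)])

lemma orthonormal_basis_parseval:
  fixes h :: "'a::euclidean_space \<Rightarrow> 'a \<Rightarrow> real"
  assumes ip: "is_inner_product h" and "orthonormal_basis h e"
  shows "h u v = (\<Sum>i<DIM('a). h u (e i) * h v (e i))"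
proof -
  have sym: "h x y = h y x" for x y using ip by (simp add: is_inner_product_def)
  have "linear (\<lambda>x. h x u)" using ip by (simp add: is_inner_product_def bilinear_def)
  from orthonormal_basis_linear_expansion[OF assms this, of v] show ?thesis
    by (simp add: sym mult.commute)
qed

lemma orthonormal_basis_representer:
  fixes h :: "'a::euclidean_space \<Rightarrow> 'a \<Rightarrow> real"
  assumes ip: "is_inner_product h" and onb: "orthonormal_basis h e" and "linear f"
  shows "f u = h u (\<Sum>i<DIM('a). f (e i) *\<^sub>R e i)"
proof -
  have lin: "linear (h u)" using ip by (simp add: is_inner_product_def bilinear_def)
  have "h u (\<Sum>i<DIM('a). f (e i) *\<^sub>R e i) = (\<Sum>i<DIM('a). h u (e i) * f (e i))"
    by (simp add: linear_sum[OF lin] linear_scale[OF lin] mult.commute)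
  also have "\<dots> = f u"
    by (rule orthonormal_basis_linear_expansion[OF ip onb \<open>linear f\<close>, symmetric])
  finally show ?thesis by (rule sym)
qed

lemma orthonormal_basis_sum_square_representer:
  fixes h :: "'a::euclidean_space \<Rightarrow> 'a \<Rightarrow> real" and f :: "'a \<Rightarrow> real"
  assumes ip: "is_inner_product h" and onb: "orthonormal_basis h e" and repr: "\<And>u. f u = h u w"
  shows "(\<Sum>i<DIM('a). (f (e i))\<^sup>2) = h w w"
  using ip orthonormal_basis_parseval[OF ip onb, of w w]
  by (simp add: repr is_inner_product_def power2_eq_square)

lemma orthonormal_bases_sum_squares_eq:
  fixes h :: "'a::euclidean_space \<Rightarrow> 'a \<Rightarrow> real" and f :: "'a \<Rightarrow> real"
  assumes ip: "is_inner_product h" and "orthonormal_basis h e" "orthonormal_basis h b"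
    and "linear f"
  shows "(\<Sum>i<DIM('a). (f (e i))\<^sup>2) = (\<Sum>i<DIM('a). (f (b i))\<^sup>2)"
  using orthonormal_basis_representer[OF ip \<open>orthonormal_basis h b\<close> \<open>linear f\<close>]
    orthonormal_basis_sum_square_representer[OF ip] assms(2,3) by metis

lemma orthonormal_basis_combination_self:
  fixes h :: "'a::euclidean_space \<Rightarrow> 'a \<Rightarrow> real"
  assumes ip: "is_inner_product h" and onb: "orthonormal_basis h e"
  shows "h (\<Sum>i<DIM('a). c i *\<^sub>R e i) (\<Sum>i<DIM('a). c i *\<^sub>R e i) = (\<Sum>i<DIM('a). (c i)\<^sup>2)"
proof -
  have bil: "bilinear h" using ip by (simp add: is_inner_product_def)
  let ?v = "\<Sum>i<DIM('a). c i *\<^sub>R e i"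
  have "h ?v ?v = (\<Sum>i<DIM('a). h ?v (e i) * h ?v (e i))"
    by (rule orthonormal_basis_parseval[OF ip onb])
  also have "\<dots> = (\<Sum>i<DIM('a). (c i)\<^sup>2)"
    by (intro sum.cong) (simp_all add: orthonormal_basis_combination_inner[OF bil onb] power2_eq_square)
  finally show ?thesis .
qed

lemma orthonormal_bases_linear_form_inequality:
  fixes g gE :: "'a::euclidean_space \<Rightarrow> 'a \<Rightarrow> real" and f :: "'a \<Rightarrow> real"
  assumes g_ip: "is_inner_product g" and gE_ip: "is_inner_product gE"
    and t_onb: "orthonormal_basis g t" and b_onb: "orthonormal_basis gE b"
    and comparison: "\<And>v. gE v v \<le> k\<^sup>2 * g v v" and "0 \<le> k" and "linear f"
  shows "(\<Sum>i<DIM('a). f (t i) * f (b i)) \<le> k * (\<Sum>i<DIM('a). (f (b i))\<^sup>2)"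
proof -
  define s where "s = (\<Sum>i<DIM('a). (f (b i))\<^sup>2)"
  define u where "u = (\<Sum>i<DIM('a). f (b i) *\<^sub>R t i)"
  define w where "w = (\<Sum>i<DIM('a). f (b i) *\<^sub>R b i)"
  have repr: "f x = gE x w" for x
    unfolding w_def by (rule orthonormal_basis_representer[OF gE_ip b_onb \<open>linear f\<close>])
  have gE_ww: "gE w w = s"
    unfolding s_def by (rule orthonormal_basis_sum_square_representer[OF gE_ip b_onb repr, symmetric])
  have g_uu: "g u u = s"
    unfolding u_def s_def by (rule orthonormal_basis_combination_self[OF g_ip t_onb])
  have "0 \<le> s" unfolding s_def by (simp add: sum_nonneg)
  have "(f u)\<^sup>2 \<le> gE u u * gE w w"
    unfolding repr
    by (rule psd_form_Cauchy_Schwarz[OF inner_product_sym_bilinear_form inner_product_self_nonneg,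
          OF gE_ip gE_ip])
  also have "\<dots> \<le> k\<^sup>2 * g u u * s"
    unfolding gE_ww using comparison[of u] \<open>0 \<le> s\<close> by (rule mult_right_mono)
  also have "\<dots> = (k * s)\<^sup>2"
    unfolding g_uu by (simp add: power2_eq_square algebra_simps)
  finally have "f u \<le> k * s"
    by (rule power2_le_imp_le) (simp add: \<open>0 \<le> k\<close> \<open>0 \<le> s\<close>)
  moreover have "f u = (\<Sum>i<DIM('a). f (t i) * f (b i))"
    by (simp add: u_def linear_sum[OF \<open>linear f\<close>] linear_scale[OF \<open>linear f\<close>] mult.commute)
  ultimately show ?thesis by (simp add: s_def)
qed

lemma trace_wrt_psd_form:
  fixes h Q :: "'a::euclidean_space \<Rightarrow> 'a \<Rightarrow> real"
  assumes ip: "is_inner_product h" and b_onb: "orthonormal_basis h b"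
    and Q: "sym_bilinear_form Q" and psd: "\<And>v. 0 \<le> Q v v"
  shows "trace_wrt h Q = (\<Sum>i<DIM('a). Q (b i) (b i))"
proof -
  obtain n :: nat and f where lin: "\<forall>j<n. linear (f j)" and sos: "\<forall>u v. Q u v = (\<Sum>j<n. f j u * f j v)"
    using psd_form_sum_of_squares[OF finite_Basis span_Basis Q psd] by blast
  have trace_sos: "(\<Sum>i<DIM('a). Q (e i) (e i)) = (\<Sum>j<n. \<Sum>i<DIM('a). (f j (e i))\<^sup>2)" for e
    unfolding power2_eq_square by (rule sum_of_squares_form_sum[OF sos])
  define e where "e = (SOME e. orthonormal_basis h e)"
  have "orthonormal_basis h e" unfolding e_def by (rule someI[of "orthonormal_basis h", OF b_onb])
  then have "(\<Sum>i<DIM('a). Q (e i) (e i)) = (\<Sum>i<DIM('a). Q (b i) (b i))"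
    unfolding trace_sos using lin orthonormal_bases_sum_squares_eq[OF ip _ b_onb] by simp
  then show ?thesis by (simp add: trace_wrt_def e_def)
qed

lemma psd_form_trace_inequality:
  fixes g gE Q :: "'a::euclidean_space \<Rightarrow> 'a \<Rightarrow> real"
  assumes g_ip: "is_inner_product g" and gE_ip: "is_inner_product gE"
    and t_onb: "orthonormal_basis g t" and b_onb: "orthonormal_basis gE b"
    and comparison: "\<And>v. gE v v \<le> k\<^sup>2 * g v v" and "0 \<le> k"
    and Q: "sym_bilinear_form Q" and psd: "\<And>v. 0 \<le> Q v v"
  shows "(\<Sum>i<DIM('a). Q (t i) (b i)) \<le> k * (\<Sum>i<DIM('a). Q (b i) (b i))"
proof -
  obtain n :: nat and f where lin: "\<forall>j<n. linear (f j)" and sos: "\<forall>u v. Q u v = (\<Sum>j<n. f j u * f j v)"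
    using psd_form_sum_of_squares[OF finite_Basis span_Basis Q psd] by blast
  have "(\<Sum>i<DIM('a). Q (t i) (b i)) = (\<Sum>j<n. \<Sum>i<DIM('a). f j (t i) * f j (b i))"
    by (rule sum_of_squares_form_sum[OF sos])
  also have "\<dots> \<le> (\<Sum>j<n. k * (\<Sum>i<DIM('a). (f j (b i))\<^sup>2))"
    using lin orthonormal_bases_linear_form_inequality[OF g_ip gE_ip t_onb b_onb comparison \<open>0 \<le> k\<close>]
    by (intro sum_mono) simp
  also have "\<dots> = k * (\<Sum>i<DIM('a). Q (b i) (b i))"
    unfolding sum_of_squares_form_sum[OF sos] by (simp add: power2_eq_square sum_distrib_left)
  finally show ?thesis .
qed

theorem proposition3p1:
  fixes g gE II :: "'a::euclidean_space \<Rightarrow> 'a \<Rightarrow> real"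
    and H :: real
    and tau taubar :: "nat \<Rightarrow> 'a"
  assumes g_ip: "is_inner_product g"
    and gE_ip: "is_inner_product gE"
    and II_sym: "sym_bilinear_form II"
    and II_psd: "\<forall>v. II v v \<ge> 0"
    and Hbar_pos: "trace_wrt gE II > 0"
    and H_pos: "H > 0"
    and comparison: "\<forall>v. H\<^sup>2 * g v v \<ge> (trace_wrt gE II)\<^sup>2 * gE v v"
    and tau_onb: "orthonormal_basis g tau"
    and taubar_onb: "orthonormal_basis gE taubar"
  shows "H \<ge> (\<Sum>i<DIM('a). II (tau i) (taubar i))"
proof -
  define Hbar where "Hbar = trace_wrt gE II"
  define k where "k = H / Hbar"
  have Hbar_eq: "Hbar = (\<Sum>i<DIM('a). II (taubar i) (taubar i))"
    unfolding Hbar_def using trace_wrt_psd_form[OF gE_ip taubar_onb II_sym] II_psd by blast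
  have "0 < Hbar" using Hbar_pos by (simp add: Hbar_def)
  then have "0 \<le> k" using H_pos by (simp add: k_def)
  have "gE v v \<le> k\<^sup>2 * g v v" for v
    using comparison \<open>0 < Hbar\<close> by (simp add: k_def Hbar_def power_divide field_simps mult.commute)
  then have "(\<Sum>i<DIM('a). II (tau i) (taubar i)) \<le> k * Hbar"
    unfolding Hbar_eq
    using psd_form_trace_inequality[OF g_ip gE_ip tau_onb taubar_onb _ \<open>0 \<le> k\<close> II_sym] II_psd
    by blast
  also have "k * Hbar = H" using \<open>0 < Hbar\<close> by (simp add: k_def)
  finally show ?thesis .
qed

end
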